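(* Let $\mathbf{X}$ be a Banach space, $\mathcal{S}\subset\mathbf{X}$, let $\mathbb{P}$ be a Borel probability measure on $\mathcal{S}$ that is critical for $\mathcal{S}$ with respect to $\mathbf{X}$, and set $s^\ast := s^\ast_{\mathbf{X}}(\mathcal{S})$. Then: (i) Let $s>s^\ast$ and let $c=c(s)>0$, $\varepsilon_0=\varepsilon_0(s)>0$ be constants with $\mathbb{P}(\mathcal{S}\cap\mathcal{B}(\mathbf{x},\varepsilon;\mathbf{X}))\le 2^{-c\varepsilon^{-1/s}}$ for all $\mathbf{x}\in\mathbf{X}$ and $\varepsilon\in(0,\varepsilon_0)$. Then for any $R\in\mathbb{N}$ and any encoder/decoder pair $(E_R,D_R)$ of code-length $R$, \[\mathbb{P}^\ast(\{\mathbf{x}\in\mathcal{S}:\|\mathbf{x}-D_R(E_R(\mathbf{x}))\|_{\mathbf{X}}\le\varepsilon\})\le 2^{R-c\varepsilon^{-1/s}}\qquad\forall\varepsilon\in(0,\varepsilon_0).\] (ii) For every $s>s^\ast$ and every codec $\mathcal{C}$, $\mathbb{P}^\ast(\mathcal{A}^s_{\mathcal{S},\mathbf{X}}(\mathcal{C}))=0$. (iii) For every $0\le s<s^\ast$ there is a codec $\mathcal{C}=((E_R,D_R))_{R\in\mathbb{N}}$ and a constant $C>0$ with $\delta_{\mathcal{S},\mathbf{X}}(E_R,D_R)\le C\cdot R^{-s}$ for all $R\in\mathbb{N}$; in particular $\mathcal{A}^s_{\mathcal{S},\mathbf{X}}(\mathcal{C})=\mathcal{S}$ and $\mathbb{P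}(\mathcal{A}^s_{\mathcal{S},\mathbf{X}}(\mathcal{C}))=1$.
   Context: Let $(\mathbf{X},\|\cdot\|_{\mathbf{X}})$ be a real Banach space and $\mathcal{S}\subset\mathbf{X}$. An encoder/decoder pair of code-length $R\in\mathbb{N}$ is a pair $(E,D)$ with $E:\mathcal{S}\to\{0,1\}^R$, $D:\{0,1\}^R\to\mathbf{X}$; its distortion is $\delta_{\mathcal{S},\mathbf{X}}(E,D)=\sup_{\mathbf{x}\in\mathcal{S}}\|\mathbf{x}-D(E(\mathbf{x}))\|_{\mathbf{X}}$. A codec is a sequence $\mathcal{C}=((E_R,D_R))_{R\in\mathbb{N}}$ with $(E_R,D_R)$ of code-length $R$. The optimal compression rate is $s^\ast_{\mathbf{X}}(\mathcal{S})=\sup\{s\ge0:\exists\text{ codec with }\sup_R R^s\delta_{\mathcal{S},\mathbf{X}}(E_R,D_R)<\infty\}$. For $s\ge0$, $\mathcal{A}^s_{\mathcal{S},\mathbf{X}}(\mathcal{C})=\{\mathbf{x}\in\mathcal{S}:\sup_R R^s\|\mathbf{x}-D_R(E_R(\mathbf{x}))\|_{\mathbf{X}}<\infty\}$. $\mathcal{S}$ carries the trace $\sigma$-algebra $\{\mathcal{S}\cap B: B\text{ Borel in }\mathbf{X}\}$; Borel probability measures on $\mathcal{S}$ are probability measures on it, and $\mathbb{P}^\ast(M)=\inf\{\sum_n\mathbb{P}(M_n): M_n\text{ measurable}, M\subset\bigcup_nM_n\}$. $\mathcal{B}(\mathbf{x},\varepsilon;\mathbf{X})$ is the closed ball. A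 Borel probability measure $\mathbb{P}$ on $\mathcal{S}$ has (logarithmic) growth order $s_0\in[0,\infty)$ w.r.t. $\mathbf{X}$ if for every $s>s_0$ there exist $\varepsilon_0,c>0$ with $\mathbb{P}(\mathcal{S}\cap\mathcal{B}(\mathbf{x},\varepsilon;\mathbf{X}))\le2^{-c\varepsilon^{-1/s}}$ for all $\mathbf{x}\in\mathbf{X}$, $\varepsilon\in(0,\varepsilon_0)$. $\mathbb{P}$ is critical for $\mathcal{S}$ w.r.t. $\mathbf{X}$ if it has growth order $s^\ast_{\mathbf{X}}(\mathcal{S})$. *)

theory Defs
  imports "HOL-Probability.Probability"
begin

text \<open>Codewords in {0,1}^R are bit lists of length R. Natural numbers R range over R \<ge> 1.\<close>

definition enc_dec_pair :: "'a set \<Rightarrow> nat \<Rightarrow> ('a \<Rightarrow> bool list) \<Rightarrow> (bool list \<Rightarrow> 'a) \<Rightarrow> bool" where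
  "enc_dec_pair S R E D \<longleftrightarrow> (\<forall>x\<in>S. length (E x) = R)"

definition distortion :: "'a::real_normed_vector set \<Rightarrow> ('a \<Rightarrow> bool list) \<Rightarrow> (bool list \<Rightarrow> 'a) \<Rightarrow> ereal" where
  "distortion S E D = (SUP x\<in>S. ereal (norm (x - D (E x))))"

definition is_codec :: "'a set \<Rightarrow> (nat \<Rightarrow> 'a \<Rightarrow> bool list) \<Rightarrow> (nat \<Rightarrow> bool list \<Rightarrow> 'a) \<Rightarrow> bool" where
  "is_codec S E D \<longleftrightarrow> (\<forall>R\<ge>1. enc_dec_pair S R (E R) (D R))"

text \<open>Optimal compression rate; the supremum of the empty set is taken to be 0.\<close>
definition opt_rate :: "'a::real_normed_vector set \<Rightarrow> ereal" where
  "opt_rate S = Sup (insert 0 {ereal s | s. s \<ge> 0 \<and> (\<exists>E D. is_codec S E D \<and>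
      (\<exists>C::real. \<forall>R\<ge>(1::nat). ereal (real R powr s) * distortion S (E R) (D R) \<le> ereal C))})"

definition approx_class :: "'a::real_normed_vector set \<Rightarrow> real \<Rightarrow> (nat \<Rightarrow> 'a \<Rightarrow> bool list) \<Rightarrow> (nat \<Rightarrow> bool list \<Rightarrow> 'a) \<Rightarrow> 'a set" where
  "approx_class S s E D = {x\<in>S. \<exists>C::real. \<forall>R\<ge>(1::nat). real R powr s * norm (x - D R (E R x)) \<le> C}"

definition outer_prob :: "'a measure \<Rightarrow> 'a set \<Rightarrow> ennreal" where
  "outer_prob M A = (INF B \<in> {B::nat \<Rightarrow> 'a set. range B \<subseteq> sets M \<and> A \<subseteq> (\<Union>n. B n)}. \<Sum>n. emeasure M (B n))"

definition growth_order :: "'a::real_normed_vector measure \<Rightarrow> 'a set \<Rightarrow> real \<Rightarrow> bool" where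
  "growth_order M S s0 \<longleftrightarrow> s0 \<ge> 0 \<and> (\<forall>s>s0. \<exists>\<epsilon>0>0. \<exists>c>0. \<forall>x \<epsilon>. 0 < \<epsilon> \<and> \<epsilon> < \<epsilon>0 \<longrightarrow>
      measure M (S \<inter> cball x \<epsilon>) \<le> 2 powr (- c * \<epsilon> powr (-1/s)))"

definition critical :: "'a::real_normed_vector measure \<Rightarrow> 'a set \<Rightarrow> bool" where
  "critical M S \<longleftrightarrow> (\<exists>s0. opt_rate S = ereal s0 \<and> growth_order M S s0)"

end

theory Submission
  imports Defs "HOL-Real_Asymp.Real_Asymp"
begin

text \<open>
  A code of length R has only 2^R codewords, so the points that a pair (E, D) reproduces
  within \<epsilon> lie in 2^R balls of radius \<epsilon> around the decoded codewords. The union bound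
  together with the growth bound 2^(-c \<epsilon>^(-1/s)) on the mass of each ball gives (i).
  For (ii), a point with error at most n R^(-s) for every R lies, for every R, in such a
  union of balls of radius n R^(-s); measuring the balls with the growth bound at an exponent
  t strictly between s* and s, the bound 2^R 2^(-c n^(-1/t) R^(s/t)) tends to 0 since s/t > 1.
  Part (iii) is the definition of s* as a supremum.
\<close>

lemma outer_prob_le_emeasure:
  assumes "A \<subseteq> U" "U \<in> sets M"
  shows "outer_prob M A \<le> emeasure M U"
proof -
  define B where "B = (\<lambda>n::nat. if n = 0 then U else {})"
  have "outer_prob M A \<le> (\<Sum>n. emeasure M (B n))"
    unfolding outer_prob_def using assms by (intro INF_lower) (auto simp: B_def)
  also have "(\<Sum>n. emeasure M (B n)) = (\<Sum>n\<in>{0}. emeasure M (B n))"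
    by (rule suminf_finite) (auto simp: B_def)
  finally show ?thesis by (simp add: B_def)
qed

lemma space_eq_of_sets_restrict_borel:
  assumes "sets M = sets (restrict_space borel S)"
  shows "space M = S"
  using sets_eq_imp_space_eq[OF assms] by (simp add: space_restrict_space)

lemma Int_cball_in_sets_restrict_borel:
  assumes "sets M = sets (restrict_space borel S)"
  shows "S \<inter> cball y e \<in> sets M"
  using assms by (auto simp: sets_restrict_space)

definition codeword_balls :: "'a::metric_space set \<Rightarrow> (bool list \<Rightarrow> 'a) \<Rightarrow> nat \<Rightarrow> real \<Rightarrow> 'a set" where
  "codeword_balls S D R e = (\<Union>w\<in>{w. length w = R}. S \<inter> cball (D w) e)"

lemma finite_bool_lists_length: "finite {w::bool list. length w = R}"
  using finite_lists_length_eq[of "UNIV :: bool set"] by simp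

lemma codeword_balls_in_sets:
  assumes "sets M = sets (restrict_space borel S)"
  shows "codeword_balls S D R e \<in> sets M"
  unfolding codeword_balls_def using finite_bool_lists_length Int_cball_in_sets_restrict_borel[OF assms]
  by (intro sets.finite_UN) auto

lemma measure_codeword_balls_le:
  assumes "finite_measure M" "sets M = sets (restrict_space borel S)"
    and "\<And>w. length w = R \<Longrightarrow> measure M (S \<inter> cball (D w) e) \<le> b"
  shows "measure M (codeword_balls S D R e) \<le> 2 ^ R * b"
proof -
  interpret finite_measure M by (rule assms(1))
  have "measure M (codeword_balls S D R e)
      \<le> (\<Sum>w\<in>{w::bool list. length w = R}. measure M (S \<inter> cball (D w) e))"
    unfolding codeword_balls_def
    using finite_bool_lists_length Int_cball_in_sets_restrict_borel[OF assms(2)]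
    by (intro measure_UNION_le) auto
  also have "\<dots> \<le> (\<Sum>w\<in>{w::bool list. length w = R}. b)"
    using assms(3) by (intro sum_mono) auto
  also have "\<dots> = 2 ^ R * b"
    using card_lists_length_eq[of "UNIV :: bool set" R] by simp
  finally show ?thesis .
qed

lemma error_set_subset_codeword_balls:
  assumes "enc_dec_pair S R E D"
  shows "{x\<in>S. norm (x - D (E x)) \<le> e} \<subseteq> codeword_balls S D R e"
  using assms by (auto simp: enc_dec_pair_def codeword_balls_def dist_norm norm_minus_commute)

lemma outer_prob_error_set_le:
  assumes "finite_measure M" "sets M = sets (restrict_space borel S)" "enc_dec_pair S R E D"
    and "\<And>x. measure M (S \<inter> cball x e) \<le> b"
  shows "outer_prob M {x\<in>S. norm (x - D (E x)) \<le> e} \<le> ennreal (2 ^ R * b)"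
proof -
  interpret finite_measure M by (rule assms(1))
  have "outer_prob M {x\<in>S. norm (x - D (E x)) \<le> e} \<le> emeasure M (codeword_balls S D R e)"
    using error_set_subset_codeword_balls[OF assms(3)] codeword_balls_in_sets[OF assms(2)]
    by (rule outer_prob_le_emeasure)
  also have "\<dots> \<le> ennreal (2 ^ R * b)"
    using measure_codeword_balls_le[OF assms(1,2) assms(4)]
    by (simp add: emeasure_eq_measure ennreal_leI)
  finally show ?thesis .
qed

lemma approx_class_subset_codeword_balls:
  assumes "is_codec S E D"
  shows "approx_class S s E D
    \<subseteq> (\<Union>n\<in>{1::nat..}. \<Inter>R\<in>{1::nat..}. codeword_balls S (D R) R (real n * real R powr (-s)))"
proof
  fix x assume "x \<in> approx_class S s E D"
  then obtain C where x: "x \<in> S" and C: "\<And>R. R \<ge> 1 \<Longrightarrow> real R powr s * norm (x - D R (E R x)) \<le> C"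
    unfolding approx_class_def by blast
  define n where "n = nat \<lceil>C\<rceil> + 1"
  have "n \<ge> 1" "C \<le> real n" unfolding n_def by linarith+
  have "x \<in> codeword_balls S (D R) R (real n * real R powr (-s))" if R: "R \<ge> 1" for R
  proof -
    have "real R powr s * norm (x - D R (E R x)) \<le> real n"
      using C[OF R] \<open>C \<le> real n\<close> by linarith
    then have "norm (x - D R (E R x)) \<le> real n * real R powr (-s)"
      using R by (simp add: powr_minus field_simps)
    moreover have "enc_dec_pair S R (E R) (D R)"
      using assms R by (simp add: is_codec_def)
    ultimately show ?thesis
      using error_set_subset_codeword_balls x by blast
  qed
  with \<open>n \<ge> 1\<close> show "x \<in> (\<Union>n\<in>{1::nat..}. \<Inter>R\<in>{1::nat..}. codeword_balls S (D R) R (real n * real R powr (-s)))"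
    by blast
qed

lemma null_sets_INT_codeword_balls:
  fixes D :: "nat \<Rightarrow> bool list \<Rightarrow> 'a::real_normed_vector"
  assumes M: "finite_measure M" "sets M = sets (restrict_space borel S)"
    and "0 < t" "t < s" "0 < c" "0 < \<epsilon>0" "0 < k"
    and growth: "\<And>x \<epsilon>. 0 < \<epsilon> \<Longrightarrow> \<epsilon> < \<epsilon>0 \<Longrightarrow> measure M (S \<inter> cball x \<epsilon>) \<le> 2 powr (- c * \<epsilon> powr (-1/t))"
  shows "(\<Inter>R\<in>{1::nat..}. codeword_balls S (D R) R (k * real R powr (-s))) \<in> null_sets M"
    (is "?V \<in> null_sets M")
proof -
  interpret finite_measure M by (rule M(1))
  have V: "?V \<in> sets M"
    using codeword_balls_in_sets[OF M(2)] by (intro sets.countable_INT') auto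
  have radius_small: "eventually (\<lambda>R. k * real R powr (-s) < \<epsilon>0) sequentially"
    using assms by (intro order_tendstoD(2)[of _ 0]) real_asymp+
  have "eventually (\<lambda>R. measure M ?V \<le> 2 ^ R * 2 powr (- c * (k * real R powr (-s)) powr (-1/t))) sequentially"
    using radius_small eventually_ge_at_top[of "1::nat"]
  proof eventually_elim
    case (elim R)
    have "measure M ?V \<le> measure M (codeword_balls S (D R) R (k * real R powr (-s)))"
      using elim(2) codeword_balls_in_sets[OF M(2)] by (intro finite_measure_mono) auto
    also have "\<dots> \<le> 2 ^ R * 2 powr (- c * (k * real R powr (-s)) powr (-1/t))"
      using elim \<open>0 < k\<close> by (intro measure_codeword_balls_le M growth) auto
    finally show ?case .
  qed
  moreover have "(\<lambda>R::nat. 2 ^ R * 2 powr (- c * (k * real R powr (-s)) powr (-1/t))) \<longlonglongrightarrow> 0"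
    using assms by real_asymp
  ultimately have "measure M ?V \<le> 0"
    by (intro tendsto_le[OF _ _ tendsto_const]) auto
  with V show ?thesis
    by (simp add: null_sets_def emeasure_eq_measure measure_le_0_iff)
qed

lemma outer_prob_approx_class_eq_0:
  fixes S :: "'a::real_normed_vector set"
  assumes "finite_measure M" "sets M = sets (restrict_space borel S)" "is_codec S E D"
    and "0 < t" "t < s" "0 < c" "0 < \<epsilon>0"
    and "\<And>x \<epsilon>. 0 < \<epsilon> \<Longrightarrow> \<epsilon> < \<epsilon>0 \<Longrightarrow> measure M (S \<inter> cball x \<epsilon>) \<le> 2 powr (- c * \<epsilon> powr (-1/t))"
  shows "outer_prob M (approx_class S s E D) = 0"
proof -
  let ?N = "\<Union>n\<in>{1::nat..}. \<Inter>R\<in>{1::nat..}. codeword_balls S (D R) R (real n * real R powr (-s))"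
  have N: "?N \<in> null_sets M"
    by (intro null_sets_UN' null_sets_INT_codeword_balls[OF assms(1,2,4-7) _ assms(8)]) auto
  have "outer_prob M (approx_class S s E D) \<le> emeasure M ?N"
    using approx_class_subset_codeword_balls[OF assms(3)] null_setsD2[OF N]
    by (rule outer_prob_le_emeasure)
  also have "\<dots> = 0" using N by (simp add: null_sets_def)
  finally show ?thesis by simp
qed

lemma critical_growth_bound_between:
  assumes "critical M S" "opt_rate S < ereal s"
  obtains t c \<epsilon>0 where "0 < t" "t < s" "0 < c" "0 < \<epsilon>0"
    "\<And>x \<epsilon>. 0 < \<epsilon> \<Longrightarrow> \<epsilon> < \<epsilon>0 \<Longrightarrow> measure M (S \<inter> cball x \<epsilon>) \<le> 2 powr (- c * \<epsilon> powr (-1/t))"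
proof -
  from assms(1) obtain s0 where s0: "opt_rate S = ereal s0" "growth_order M S s0"
    unfolding critical_def by blast
  define t where "t = (s0 + s) / 2"
  have "0 \<le> s0" "s0 < s"
    using s0 assms(2) by (auto simp: growth_order_def)
  then have "s0 < t" "0 < t" "t < s" by (auto simp: t_def)
  with s0(2) that show ?thesis
    unfolding growth_order_def by blast
qed

lemma codec_below_opt_rate:
  assumes "0 \<le> s" "ereal s < opt_rate S"
  obtains E D C where "is_codec S E D" "0 < C"
    "\<And>R. R \<ge> 1 \<Longrightarrow> distortion S (E R) (D R) \<le> ereal (C * real R powr (- s))"
proof -
  obtain s' E D C where "s < s'" "is_codec S E D"
    and C: "\<And>R. R \<ge> 1 \<Longrightarrow> ereal (real R powr s') * distortion S (E R) (D R) \<le> ereal C"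
    using assms unfolding opt_rate_def less_Sup_iff by (fastforce simp: zero_ereal_def)
  define C' where "C' = max C 1"
  have "distortion S (E R) (D R) \<le> ereal (C' * real R powr (- s))" if R: "R \<ge> 1" for R
  proof -
    have pos: "real R powr s' > 0" using R by simp
    have "distortion S (E R) (D R) \<le> ereal (C / real R powr s')"
      using C[OF R] pos by (cases "distortion S (E R) (D R)") (auto simp: field_simps)
    also have "C / real R powr s' \<le> C' / real R powr s'"
      using pos by (intro divide_right_mono) (auto simp: C'_def)
    also have "\<dots> \<le> C' / real R powr s"
      using R \<open>s < s'\<close> assms(1) by (intro divide_left_mono powr_mono) (auto simp: C'_def)
    finally show ?thesis by (simp add: powr_minus divide_inverse)
  qed
  moreover have "0 < C'" by (simp add: C'_def)
  ultimately show ?thesis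
    using that \<open>is_codec S E D\<close> by blast
qed

lemma approx_class_eq_if_distortion_le:
  assumes "\<And>R. R \<ge> 1 \<Longrightarrow> distortion S (E R) (D R) \<le> ereal (C * real R powr (- s))"
  shows "approx_class S s E D = S"
proof -
  have "real R powr s * norm (x - D R (E R x)) \<le> C" if "x \<in> S" "R \<ge> 1" for x R
  proof -
    have "ereal (norm (x - D R (E R x))) \<le> distortion S (E R) (D R)"
      unfolding distortion_def using \<open>x \<in> S\<close> by (rule SUP_upper)
    also note assms[OF \<open>R \<ge> 1\<close>]
    finally have "norm (x - D R (E R x)) \<le> C * real R powr (- s)" by simp
    then have "real R powr s * norm (x - D R (E R x)) \<le> real R powr s * (C * real R powr (- s))"
      by (intro mult_left_mono) auto
    also have "\<dots> = C" using \<open>R \<ge> 1\<close> by (simp add: powr_minus field_simps)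
    finally show ?thesis .
  qed
  then show ?thesis unfolding approx_class_def by blast
qed

theorem theorem2p2:
  fixes S :: "'a::banach set" and M :: "'a measure"
  assumes "prob_space M" and "sets M = sets (restrict_space borel S)"
    and "critical M S"
  shows
   "(\<forall>s c \<epsilon>0 R E D. ereal s > opt_rate S \<and> c > 0 \<and> \<epsilon>0 > 0 \<and>
        (\<forall>x \<epsilon>. 0 < \<epsilon> \<and> \<epsilon> < \<epsilon>0 \<longrightarrow> measure M (S \<inter> cball x \<epsilon>) \<le> 2 powr (- c * \<epsilon> powr (-1/s))) \<and>
        R \<ge> 1 \<and> enc_dec_pair S R E D \<longrightarrow>
        (\<forall>\<epsilon>. 0 < \<epsilon> \<and> \<epsilon> < \<epsilon>0 \<longrightarrow>
           outer_prob M {x\<in>S. norm (x - D (E x)) \<le> \<epsilon>} \<le> ennreal (2 powr (real R - c * \<epsilon> powr (-1/s)))))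
  \<and> (\<forall>s E D. ereal s > opt_rate S \<and> is_codec S E D \<longrightarrow> outer_prob M (approx_class S s E D) = 0)
  \<and> (\<forall>s. 0 \<le> s \<and> ereal s < opt_rate S \<longrightarrow>
        (\<exists>E D. is_codec S E D \<and>
           (\<exists>C>0. \<forall>R\<ge>(1::nat). distortion S (E R) (D R) \<le> ereal (C * real R powr (- s))) \<and>
           approx_class S s E D = S \<and> measure M (approx_class S s E D) = 1))"
proof (intro conjI allI impI)
  fix s c \<epsilon>0 R E D \<epsilon>
  assume "ereal s > opt_rate S \<and> c > 0 \<and> \<epsilon>0 > 0 \<and>
      (\<forall>x \<epsilon>. 0 < \<epsilon> \<and> \<epsilon> < \<epsilon>0 \<longrightarrow> measure M (S \<inter> cball x \<epsilon>) \<le> 2 powr (- c * \<epsilon> powr (-1/s))) \<and>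
      R \<ge> 1 \<and> enc_dec_pair S R E D" and "0 < \<epsilon> \<and> \<epsilon> < \<epsilon>0"
  then have "outer_prob M {x\<in>S. norm (x - D (E x)) \<le> \<epsilon>} \<le> ennreal (2 ^ R * 2 powr (- c * \<epsilon> powr (-1/s)))"
    by (intro outer_prob_error_set_le prob_space.finite_measure[OF assms(1)] assms(2)) auto
  then show "outer_prob M {x\<in>S. norm (x - D (E x)) \<le> \<epsilon>} \<le> ennreal (2 powr (real R - c * \<epsilon> powr (-1/s)))"
    by (simp add: powr_diff powr_realpow powr_minus divide_inverse)
next
  fix s E D
  assume s: "ereal s > opt_rate S \<and> is_codec S E D"
  then obtain t c \<epsilon>0 where bound: "0 < t" "t < s" "0 < c" "0 < \<epsilon>0"
    "\<And>x \<epsilon>. 0 < \<epsilon> \<Longrightarrow> \<epsilon> < \<epsilon>0 \<Longrightarrow> measure M (S \<inter> cball x \<epsilon>) \<le> 2 powr (- c * \<epsilon> powr (-1/t))"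
    using critical_growth_bound_between[OF assms(3)] by blast
  with s show "outer_prob M (approx_class S s E D) = 0"
    by (intro outer_prob_approx_class_eq_0[OF prob_space.finite_measure[OF assms(1)] assms(2) _ bound]) auto
next
  fix s :: real
  assume "0 \<le> s \<and> ereal s < opt_rate S"
  then obtain E D C where "is_codec S E D" "0 < C"
    and distortion: "\<And>R. R \<ge> 1 \<Longrightarrow> distortion S (E R) (D R) \<le> ereal (C * real R powr (- s))"
    by (auto elim: codec_below_opt_rate)
  moreover have "approx_class S s E D = S"
    using distortion by (rule approx_class_eq_if_distortion_le)
  moreover have "measure M S = 1"
    using prob_space.prob_space[OF assms(1)] space_eq_of_sets_restrict_borel[OF assms(2)] by simp
  ultimately show "\<exists>E D. is_codec S E D \<and>
      (\<exists>C>0. \<forall>R\<ge>(1::nat). distortion S (E R) (D R) \<le> ereal (C * real R powr (- s))) \<and>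
      approx_class S s E D = S \<and> measure M (approx_class S s E D) = 1"
    by (metis (no_types, lifting))
qed

end
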